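(* Let $n\ge1$. Every configuration in $\Omega'_n$ can be divided uniquely into rectangular blocks of sizes $n\times n$, $n\times(n+1)$, $(n+1)\times n$ and $(n+1)\times(n+1)$, each containing a unique junction tile (tile of $J'_n$), located at its lower left corner.
   Context: $V_n=\{(v_0,v_1,v_2)\in\mathbb{Z}^3: 0\le v_0\le v_1\le 1,\ v_1\le v_2\le n+1\}$, elements written as words $v_0v_1v_2$. A Wang tile is $t=(a,b,c,d)$ with $\mathrm{RIGHT}(t)=a$, $\mathrm{TOP}(t)=b$, $\mathrm{LEFT}(t)=c$, $\mathrm{BOTTOM}(t)=d$; $\hat t=(b,a,d,c)$, $\hat S=\{\hat t:t\in S\}$. Define (as (right, top, left, bottom)): $W_n=\{(11(i+1),11(j+1),11i,11j):1\le i,j\le n\}$; $B'_n=\{(00(i+1),111,00i,11n):0\le i\le n\}$; $G_n=\{(01(i+1),111,00i,11(n+1)):0\le i\le n\}$; $Y_n=\{(01(i+1),112,01i,11(n+1)):1\le i\le n\}$; $A_n=\{(00(i+1),112,01i,11n):1\le i\le n\}$; $J'_n=\{((0,k,l),(0,r,s),(0,s,r+n),(0,l,k+n)):(k,l),(r,s)\in\{(0,0),(0,1),(1,1)\}\}$ (junction tiles). $\mathcal T'_n=W_n\cup B'_n\cup G_n\cup Y_n\cup A_n\cup\hat B'_n\cup\hat G_n\cup\hat Y_n\cup\hat A_n\cup J'_n$. $\Omega'_n$ is the set of configurations $x:\mathbb Z^2\to\mathcal T'_n$ with $\mathrm{RIGHT}(x(\mathbf m))=\mathrm{LEFT}(x(\mathbf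 m+\mathbf e_1))$ and $\mathrm{TOP}(x(\mathbf m))=\mathrm{BOTTOM}(x(\mathbf m+\mathbf e_2))$ for all $\mathbf m$. *)

theory Defs
  imports Main
begin

text \<open>Colours are integer triples v0 v1 v2 (the word v0v1v2). A Wang tile is a
quadruple (RIGHT, TOP, LEFT, BOTTOM).\<close>

type_synonym colour = "int \<times> int \<times> int"
type_synonym tile = "colour \<times> colour \<times> colour \<times> colour"

definition V :: "nat \<Rightarrow> colour set" where
  "V n = {(v0, v1, v2). 0 \<le> v0 \<and> v0 \<le> v1 \<and> v1 \<le> 1 \<and> v1 \<le> v2 \<and> v2 \<le> int n + 1}"

fun RIGHT :: "tile \<Rightarrow> colour" where "RIGHT (a, b, c, d) = a"
fun TOP :: "tile \<Rightarrow> colour" where "TOP (a, b, c, d) = b"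
fun LEFT :: "tile \<Rightarrow> colour" where "LEFT (a, b, c, d) = c"
fun BOTTOM :: "tile \<Rightarrow> colour" where "BOTTOM (a, b, c, d) = d"

fun hat :: "tile \<Rightarrow> tile" where "hat (a, b, c, d) = (b, a, d, c)"

definition W :: "nat \<Rightarrow> tile set" where
  "W n = {((1,1,i+1), (1,1,j+1), (1,1,i), (1,1,j)) | i j. 1 \<le> i \<and> i \<le> int n \<and> 1 \<le> j \<and> j \<le> int n}"

definition B' :: "nat \<Rightarrow> tile set" where
  "B' n = {((0,0,i+1), (1,1,1), (0,0,i), (1,1,int n)) | i. 0 \<le> i \<and> i \<le> int n}"

definition G :: "nat \<Rightarrow> tile set" where
  "G n = {((0,1,i+1), (1,1,1), (0,0,i), (1,1,int n + 1)) | i. 0 \<le> i \<and> i \<le> int n}"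

definition Y :: "nat \<Rightarrow> tile set" where
  "Y n = {((0,1,i+1), (1,1,2), (0,1,i), (1,1,int n + 1)) | i. 1 \<le> i \<and> i \<le> int n}"

definition A :: "nat \<Rightarrow> tile set" where
  "A n = {((0,0,i+1), (1,1,2), (0,1,i), (1,1,int n)) | i. 1 \<le> i \<and> i \<le> int n}"

definition junction_pairs :: "(int \<times> int) set" where
  "junction_pairs = {(0,0), (0,1), (1,1)}"

definition J' :: "nat \<Rightarrow> tile set" where
  "J' n = {((0,k,l), (0,r,s), (0,s,r + int n), (0,l,k + int n)) | k l r s.
             (k, l) \<in> junction_pairs \<and> (r, s) \<in> junction_pairs}"

definition T' :: "nat \<Rightarrow> tile set" where
  "T' n = W n \<union> B' n \<union> G n \<union> Y n \<union> A n
          \<union> hat ` B' n \<union> hat ` G n \<union> hat ` Y n \<union> hat ` A n \<union> J' n"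

definition Omega' :: "nat \<Rightarrow> (int \<times> int \<Rightarrow> tile) set" where
  "Omega' n = {x. (\<forall>m. x m \<in> T' n) \<and>
     (\<forall>a b. RIGHT (x (a, b)) = LEFT (x (a + 1, b)) \<and> TOP (x (a, b)) = BOTTOM (x (a, b + 1)))}"

text \<open>A block is ((p1, p2), (w, h)): lower left corner (p1, p2), width w (horizontal
extent) and height h (vertical extent); it occupies [p1, p1+w) x [p2, p2+h).\<close>
type_synonym block = "(int \<times> int) \<times> (int \<times> int)"

fun cells :: "block \<Rightarrow> (int \<times> int) set" where
  "cells ((p1, p2), (w, h)) = {(a, b). p1 \<le> a \<and> a < p1 + w \<and> p2 \<le> b \<and> b < p2 + h}"

fun corner :: "block \<Rightarrow> int \<times> int" where
  "corner ((p1, p2), (w, h)) = (p1, p2)"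

fun block_size :: "block \<Rightarrow> int \<times> int" where
  "block_size ((p1, p2), (w, h)) = (w, h)"

definition good_division :: "nat \<Rightarrow> (int \<times> int \<Rightarrow> tile) \<Rightarrow> block set \<Rightarrow> bool" where
  "good_division n x D \<longleftrightarrow>
     (\<forall>B\<in>D. fst (block_size B) \<in> {int n, int n + 1} \<and> snd (block_size B) \<in> {int n, int n + 1}) \<and>
     (\<forall>m. \<exists>!B. B \<in> D \<and> m \<in> cells B) \<and>
     (\<forall>B\<in>D. x (corner B) \<in> J' n \<and> (\<forall>m\<in>cells B. x m \<in> J' n \<longrightarrow> m = corner B))"

end

theory Submission
  imports Defs
begin

text \<open>Every tile passes the v0 component of its left colour on to its right colour, and that of
its bottom colour on to its top colour. So each row carries a constant v0 on its vertical edges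
and each column a constant v0 on its horizontal edges; call a row or column a junction row or
column if this value is 0. The junction tiles are exactly the tiles with v0 = 0 on their left
and bottom, so they sit at the crossings of junction rows and junction columns.
In a non-junction row every tile raises the v2 component of the vertical colours by one. As v2
lies in [0, n+1], is at most 1 above a junction tile and at least n below one, consecutive
junction rows are n, n+1 or n+2 apart. The distance n+2 cannot occur: in a non-junction column
the tile on a junction row already has v2 at least 1 on top, and if all columns are junction
columns then horizontally adjacent junction tiles force n = 1, a case settled by inspecting the
tiles. Transposition with hat swaps rows and columns. Since a block contains no junction other
than its corner, the blocks spanned by consecutive junction rows and columns form the only
admissible division.\<close>

section \<open>Dividing the plane along two sets of lines\<close>

definition unbounded_both_ways :: "(int \<Rightarrow> bool) \<Rightarrow> bool" where
  "unbounded_both_ways P \<longleftrightarrow> (\<forall>b. \<exists>c>b. P c) \<and> (\<forall>b. \<exists>c<b. P c)"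

text \<open>The least element of P above b, searched over nat since int is not well-ordered; junk if
P holds nowhere above b.\<close>

definition next_after :: "(int \<Rightarrow> bool) \<Rightarrow> int \<Rightarrow> int" where
  "next_after P b = b + 1 + int (LEAST d. P (b + 1 + int d))"

lemma next_after_gt: "b < next_after P b"
  unfolding next_after_def by simp

lemma next_after_mem:
  assumes "\<exists>c>b. P c"
  shows "P (next_after P b)"
proof -
  obtain c where "b < c" "P c" using assms by blast
  then have "P (b + 1 + int (nat (c - b - 1)))" by simp
  then show ?thesis unfolding next_after_def by (rule LeastI)
qed

lemma not_between_next_after:
  assumes "b < y" "y < next_after P b"
  shows "\<not> P y"
proof
  assume "P y"
  with \<open>b < y\<close> have "P (b + 1 + int (nat (y - b - 1)))" by simp
  then have "(LEAST d. P (b + 1 + int d)) \<le> nat (y - b - 1)" by (rule Least_le)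
  with assms show False unfolding next_after_def by linarith
qed

lemma ex1_interval:
  assumes "unbounded_both_ways P"
  shows "\<exists>!b. P b \<and> b \<le> q \<and> q < next_after P b"
proof (rule ex_ex1I)
  obtain c where "c < q + 1" "P c" using assms unfolding unbounded_both_ways_def by blast
  then have "P (q - int (nat (q - c)))" by simp
  define d where "d = (LEAST e. P (q - int e))"
  have d: "P (q - int d)" unfolding d_def by (rule LeastI) fact
  have "q < next_after P (q - int d)"
  proof (rule ccontr)
    let ?c = "next_after P (q - int d)"
    assume "\<not> q < ?c"
    moreover have "P ?c"
      using assms by (intro next_after_mem) (auto simp: unbounded_both_ways_def)
    ultimately have "d \<le> nat (q - ?c)" unfolding d_def by (intro Least_le) simp
    then show False using \<open>\<not> q < ?c\<close> next_after_gt[of "q - int d" P] by linarith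
  qed
  with d show "\<exists>b. P b \<and> b \<le> q \<and> q < next_after P b"
    by (intro exI[of _ "q - int d"]) simp
next
  fix b b' assume "P b \<and> b \<le> q \<and> q < next_after P b" "P b' \<and> b' \<le> q \<and> q < next_after P b'"
  then show "b = b'"
    using not_between_next_after[of b b' P] not_between_next_after[of b' b P]
    by (cases b b' rule: linorder_cases) auto
qed

definition grid_block :: "(int \<Rightarrow> bool) \<Rightarrow> (int \<Rightarrow> bool) \<Rightarrow> int \<times> int \<Rightarrow> block" where
  "grid_block Q P = (\<lambda>(a, b). ((a, b), (next_after Q a - a, next_after P b - b)))"

definition grid_blocks :: "(int \<Rightarrow> bool) \<Rightarrow> (int \<Rightarrow> bool) \<Rightarrow> block set" where
  "grid_blocks Q P = grid_block Q P ` {(a, b). Q a \<and> P b}"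

lemma mem_cells_grid_block:
  "(c, d) \<in> cells (grid_block Q P (a, b)) \<longleftrightarrow>
     a \<le> c \<and> c < next_after Q a \<and> b \<le> d \<and> d < next_after P b"
  by (simp add: grid_block_def)

lemma corner_grid_block [simp]: "corner (grid_block Q P s) = s"
  by (cases s) (simp add: grid_block_def)

lemma block_size_grid_block [simp]:
  "block_size (grid_block Q P (a, b)) = (next_after Q a - a, next_after P b - b)"
  by (simp add: grid_block_def)

lemma grid_block_marked_cell:
  assumes "(c, d) \<in> cells (grid_block Q P (a, b))" "Q c" "P d"
  shows "(c, d) = (a, b)"
  using assms not_between_next_after[of a c Q] not_between_next_after[of b d P]
  by (force simp: mem_cells_grid_block)

lemma grid_blocks_partition:
  assumes "unbounded_both_ways Q" "unbounded_both_ways P"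
  shows "\<exists>!B. B \<in> grid_blocks Q P \<and> m \<in> cells B"
proof -
  obtain c d where m: "m = (c, d)" by (cases m)
  obtain a where a: "Q a \<and> a \<le> c \<and> c < next_after Q a"
    and a_unique: "\<And>a'. Q a' \<and> a' \<le> c \<and> c < next_after Q a' \<Longrightarrow> a' = a"
    using ex1_interval[OF assms(1), of c] by (elim ex1E) blast
  obtain b where b: "P b \<and> b \<le> d \<and> d < next_after P b"
    and b_unique: "\<And>b'. P b' \<and> b' \<le> d \<and> d < next_after P b' \<Longrightarrow> b' = b"
    using ex1_interval[OF assms(2), of d] by (elim ex1E) blast
  show ?thesis
  proof (rule ex1I[of _ "grid_block Q P (a, b)"])
    show "grid_block Q P (a, b) \<in> grid_blocks Q P \<and> m \<in> cells (grid_block Q P (a, b))"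
      using a b m by (auto simp: grid_blocks_def mem_cells_grid_block)
  next
    fix B assume "B \<in> grid_blocks Q P \<and> m \<in> cells B"
    then obtain a' b' where B: "B = grid_block Q P (a', b')" "Q a'" "P b'"
      "m \<in> cells (grid_block Q P (a', b'))"
      unfolding grid_blocks_def by blast
    then have "a' = a" "b' = b"
      using a_unique[of a'] b_unique[of b'] m by (simp_all add: mem_cells_grid_block)
    then show "B = grid_block Q P (a, b)" using B by simp
  qed
qed

lemma grid_blocks_unique:
  assumes Q: "unbounded_both_ways Q" and P: "unbounded_both_ways P"
    and partition: "\<forall>m. \<exists>!B. B \<in> D \<and> m \<in> cells B"
    and positive: "\<forall>B\<in>D. 0 < fst (block_size B) \<and> 0 < snd (block_size B)"
    and marked_corner: "\<forall>B\<in>D. Q (fst (corner B)) \<and> P (snd (corner B)) \<and>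
                          (\<forall>m\<in>cells B. Q (fst m) \<and> P (snd m) \<longrightarrow> m = corner B)"
  shows "D = grid_blocks Q P"
proof -
  have within: "w \<le> next_after Q a - a \<and> h \<le> next_after P b - b"
    if B: "((a, b), (w, h)) \<in> D" for a b w h
  proof -
    have "0 < w" "0 < h" "Q a" "P b" using positive marked_corner B by auto
    have "Q (next_after Q a)" "P (next_after P b)"
      using Q P by (auto intro: next_after_mem simp: unbounded_both_ways_def)
    then have "(next_after Q a, b) \<notin> cells ((a, b), (w, h))"
      and "(a, next_after P b) \<notin> cells ((a, b), (w, h))"
      using marked_corner B \<open>Q a\<close> \<open>P b\<close> next_after_gt[of a Q] next_after_gt[of b P] by fastforce+
    then show ?thesis using \<open>0 < w\<close> \<open>0 < h\<close> next_after_gt[of a Q] next_after_gt[of b P] by auto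
  qed
  have grid_block_in: "grid_block Q P (corner B) \<in> grid_blocks Q P" if "B \<in> D" for B
    using marked_corner that unfolding grid_blocks_def
    by (intro imageI) (auto simp: mem_Times_iff)
  have same_corner: "corner B = s"
    if "B \<in> D" "m \<in> cells B" "grid_block Q P s \<in> grid_blocks Q P" "m \<in> cells (grid_block Q P s)"
    for B m s
  proof -
    have "m \<in> cells (grid_block Q P (corner B))"
      using within[of "fst (corner B)" "snd (corner B)"] that(1,2)
      by (cases B) (fastforce simp: grid_block_def)
    then have "grid_block Q P (corner B) = grid_block Q P s"
      using grid_blocks_partition[OF Q P, of m] grid_block_in that by blast
    then show ?thesis by (metis corner_grid_block)
  qed
  have corner_in_cells: "corner B \<in> cells B" if "B \<in> D" for B
    using positive that by (cases B) auto
  have D_grid: "B = grid_block Q P (corner B)" if "B \<in> D" for B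
  proof -
    obtain a b w h where B: "B = ((a, b), (w, h))" by (metis prod.collapse)
    txt \<open>The block of D containing the far corner of the grid block at the corner of B is B
      itself, so B is no smaller than that grid block.\<close>
    let ?m = "(next_after Q a - 1, next_after P b - 1)"
    have "?m \<in> cells (grid_block Q P (corner B))"
      using B next_after_gt[of a Q] next_after_gt[of b P] by (simp add: grid_block_def)
    moreover obtain B' where "B' \<in> D" "?m \<in> cells B'" using partition by blast
    ultimately have "corner B' = corner B" using same_corner grid_block_in that by blast
    then have "B' = B" using partition corner_in_cells \<open>B' \<in> D\<close> that by metis
    then have "?m \<in> cells B" using \<open>?m \<in> cells B'\<close> by simp
    then show ?thesis using within[of a b w h] that B by (auto simp: grid_block_def)
  qed
  show ?thesis
  proof
    show "D \<subseteq> grid_blocks Q P" using D_grid grid_block_in by auto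
  next
    show "grid_blocks Q P \<subseteq> D"
    proof
      fix G assume "G \<in> grid_blocks Q P"
      then obtain s where G: "G = grid_block Q P s" "G \<in> grid_blocks Q P"
        unfolding grid_blocks_def by blast
      obtain B where B: "B \<in> D" "s \<in> cells B" using partition by blast
      have "s \<in> cells G"
        using G next_after_gt by (cases s) (auto simp: grid_block_def)
      then have "corner B = s" using same_corner[OF B] G by blast
      then show "G \<in> D" using D_grid B G by metis
    qed
  qed
qed

fun v0 :: "colour \<Rightarrow> int" where "v0 (a, _, _) = a"
fun v2 :: "colour \<Rightarrow> int" where "v2 (_, _, c) = c"

lemma T'E:
  assumes "t \<in> T' n"
  obtains (W) i j where "t = ((1,1,i+1),(1,1,j+1),(1,1,i),(1,1,j))"
      "1 \<le> i" "i \<le> int n" "1 \<le> j" "j \<le> int n"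
  | (B) i where "t = ((0,0,i+1),(1,1,1),(0,0,i),(1,1,int n))" "0 \<le> i" "i \<le> int n"
  | (G) i where "t = ((0,1,i+1),(1,1,1),(0,0,i),(1,1,int n + 1))" "0 \<le> i" "i \<le> int n"
  | (Y) i where "t = ((0,1,i+1),(1,1,2),(0,1,i),(1,1,int n + 1))" "1 \<le> i" "i \<le> int n"
  | (A) i where "t = ((0,0,i+1),(1,1,2),(0,1,i),(1,1,int n))" "1 \<le> i" "i \<le> int n"
  | (hat_B) i where "t = ((1,1,1),(0,0,i+1),(1,1,int n),(0,0,i))" "0 \<le> i" "i \<le> int n"
  | (hat_G) i where "t = ((1,1,1),(0,1,i+1),(1,1,int n + 1),(0,0,i))" "0 \<le> i" "i \<le> int n"
  | (hat_Y) i where "t = ((1,1,2),(0,1,i+1),(1,1,int n + 1),(0,1,i))" "1 \<le> i" "i \<le> int n"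
  | (hat_A) i where "t = ((1,1,2),(0,0,i+1),(1,1,int n),(0,1,i))" "1 \<le> i" "i \<le> int n"
  | (J) k l r s where "t = ((0,k,l),(0,r,s),(0,s,r + int n),(0,l,k + int n))"
      "(k, l) \<in> {(0,0),(0,1),(1,1)}" "(r, s) \<in> {(0,0),(0,1),(1,1)}"
proof -
  from assms consider "t \<in> W n" | "t \<in> B' n" | "t \<in> G n" | "t \<in> Y n" | "t \<in> A n"
    | "t \<in> hat ` B' n" | "t \<in> hat ` G n" | "t \<in> hat ` Y n" | "t \<in> hat ` A n" | "t \<in> J' n"
    unfolding T'_def by blast
  then show ?thesis
  proof cases
    case 1 then show ?thesis using that(1) unfolding W_def by blast
  next
    case 2 then show ?thesis using that(2) unfolding B'_def by blast
  next
    case 3 then show ?thesis using that(3) unfolding G_def by blast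
  next
    case 4 then show ?thesis using that(4) unfolding Y_def by blast
  next
    case 5 then show ?thesis using that(5) unfolding A_def by blast
  next
    case 6 then show ?thesis using that(6) unfolding B'_def by auto
  next
    case 7 then show ?thesis using that(7) unfolding G_def by auto
  next
    case 8 then show ?thesis using that(8) unfolding Y_def by auto
  next
    case 9 then show ?thesis using that(9) unfolding A_def by auto
  next
    case 10 then show ?thesis using that(10) unfolding J'_def junction_pairs_def by blast
  qed
qed

lemma J'E:
  assumes "t \<in> J' n"
  obtains k l r s where "t = ((0,k,l),(0,r,s),(0,s,r + int n),(0,l,k + int n))"
    "(k, l) \<in> {(0,0),(0,1),(1,1)}" "(r, s) \<in> {(0,0),(0,1),(1,1)}"
  using assms unfolding J'_def junction_pairs_def by blast

lemma v0_RIGHT_eq_v0_LEFT: "t \<in> T' n \<Longrightarrow> v0 (RIGHT t) = v0 (LEFT t)"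
  by (erule T'E) auto

lemma J'_iff_v0_LEFT_BOTTOM:
  assumes "t \<in> T' n"
  shows "t \<in> J' n \<longleftrightarrow> v0 (LEFT t) = 0 \<and> v0 (BOTTOM t) = 0"
proof
  show "t \<in> J' n \<Longrightarrow> v0 (LEFT t) = 0 \<and> v0 (BOTTOM t) = 0" by (erule J'E) auto
  show "v0 (LEFT t) = 0 \<and> v0 (BOTTOM t) = 0 \<Longrightarrow> t \<in> J' n"
    using assms by (rule T'E) (auto simp: J'_def junction_pairs_def)
qed

lemma v2_bounds: "t \<in> T' n \<Longrightarrow> 0 \<le> v2 (TOP t) \<and> v2 (BOTTOM t) \<le> int n + 1"
  by (erule T'E) auto

lemma v2_TOP_eq_v2_BOTTOM_plus_1:
  "t \<in> T' n \<Longrightarrow> v0 (LEFT t) \<noteq> 0 \<Longrightarrow> v2 (TOP t) = v2 (BOTTOM t) + 1"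
  by (erule T'E) auto

lemma J'_v2_bounds: "t \<in> J' n \<Longrightarrow> v2 (TOP t) \<le> 1 \<and> int n \<le> v2 (BOTTOM t)"
  by (erule J'E) auto

lemma v2_TOP_ge_1:
  "t \<in> T' n \<Longrightarrow> v0 (LEFT t) = 0 \<Longrightarrow> v0 (BOTTOM t) \<noteq> 0 \<Longrightarrow> 1 \<le> v2 (TOP t)"
  by (erule T'E) auto

lemma J'_horizontal_neighbours:
  "t \<in> J' n \<Longrightarrow> t' \<in> J' n \<Longrightarrow> RIGHT t = LEFT t' \<Longrightarrow> n \<le> 1"
  by (erule J'E, erule J'E) auto

lemma J'_1_v2_gap_2:
  "t \<in> J' 1 \<Longrightarrow> t' \<in> J' 1 \<Longrightarrow> v2 (BOTTOM t') = v2 (TOP t) + 2 \<Longrightarrow>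
     TOP t = (0,0,0) \<and> BOTTOM t' = (0,1,2)"
  by (erule J'E, erule J'E) auto

lemma T'_1_above_000:
  "t \<in> T' 1 \<Longrightarrow> BOTTOM t = (0,0,0) \<Longrightarrow> v0 (LEFT t) \<noteq> 0 \<Longrightarrow>
     TOP t = (0,1,1) \<Longrightarrow> LEFT t = (1,1,2) \<and> RIGHT t = (1,1,1)"
  by (erule T'E) auto

lemma T'_1_below_012:
  "t \<in> T' 1 \<Longrightarrow> TOP t = (0,1,2) \<Longrightarrow> v0 (LEFT t) \<noteq> 0 \<Longrightarrow>
     LEFT t = (1,1,2) \<and> (RIGHT t = (1,1,2) \<longrightarrow> BOTTOM t = (0,1,1))"
  by (erule T'E) auto

lemma hat_sides [simp]:
  "RIGHT (hat t) = TOP t" "TOP (hat t) = RIGHT t" "LEFT (hat t) = BOTTOM t" "BOTTOM (hat t) = LEFT t"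
  by (cases t; simp)+

lemma hat_W: "t \<in> W n \<Longrightarrow> hat t \<in> W n"
  unfolding W_def by auto

lemma hat_J': "t \<in> J' n \<Longrightarrow> hat t \<in> J' n"
  unfolding J'_def by auto

lemma hat_T': "t \<in> T' n \<Longrightarrow> hat t \<in> T' n"
  unfolding T'_def by (elim UnE) (auto simp: hat_W hat_J')

section \<open>Junction rows and columns\<close>

lemma Omega'_T': "x \<in> Omega' n \<Longrightarrow> x m \<in> T' n"
  unfolding Omega'_def by blast

lemma Omega'_RIGHT_LEFT: "x \<in> Omega' n \<Longrightarrow> RIGHT (x (a, b)) = LEFT (x (a + 1, b))"
  unfolding Omega'_def by blast

lemma Omega'_TOP_BOTTOM: "x \<in> Omega' n \<Longrightarrow> TOP (x (a, b)) = BOTTOM (x (a, b + 1))"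
  unfolding Omega'_def by blast

definition transpose_config :: "(int \<times> int \<Rightarrow> tile) \<Rightarrow> int \<times> int \<Rightarrow> tile" where
  "transpose_config x = (\<lambda>(a, b). hat (x (b, a)))"

lemma transpose_config_Omega':
  assumes "x \<in> Omega' n"
  shows "transpose_config x \<in> Omega' n"
  unfolding Omega'_def mem_Collect_eq
proof (intro conjI allI)
  show "transpose_config x m \<in> T' n" for m
    using hat_T' Omega'_T'[OF assms] by (cases m) (simp add: transpose_config_def)
  show "RIGHT (transpose_config x (a, b)) = LEFT (transpose_config x (a + 1, b))" for a b
    using Omega'_TOP_BOTTOM[OF assms, of b a] by (simp add: transpose_config_def)
  show "TOP (transpose_config x (a, b)) = BOTTOM (transpose_config x (a, b + 1))" for a b
    using Omega'_RIGHT_LEFT[OF assms, of b a] by (simp add: transpose_config_def)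
qed

lemma shift_invariant_const:
  fixes f :: "int \<Rightarrow> 'a"
  assumes "\<And>a. f (a + 1) = f a"
  shows "f a = f 0"
proof (induct a rule: int_induct[where k = 0])
  case (step2 i) then show ?case using assms[of "i - 1"] by simp
qed (use assms in simp_all)

definition junction_row :: "(int \<times> int \<Rightarrow> tile) \<Rightarrow> int \<Rightarrow> bool" where
  "junction_row x b \<longleftrightarrow> v0 (LEFT (x (0, b))) = 0"

definition junction_col :: "(int \<times> int \<Rightarrow> tile) \<Rightarrow> int \<Rightarrow> bool" where
  "junction_col x a \<longleftrightarrow> v0 (BOTTOM (x (a, 0))) = 0"

lemma junction_row_transpose_config: "junction_row (transpose_config x) = junction_col x"
  unfolding junction_row_def junction_col_def transpose_config_def by auto

lemma v0_LEFT_iff_junction_row: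
  assumes "x \<in> Omega' n"
  shows "v0 (LEFT (x (a, b))) = 0 \<longleftrightarrow> junction_row x b"
proof -
  have "v0 (LEFT (x (a, b))) = v0 (LEFT (x (0, b)))"
    by (rule shift_invariant_const[where f = "\<lambda>a. v0 (LEFT (x (a, b)))"])
       (simp add: Omega'_RIGHT_LEFT[OF assms, symmetric]
          v0_RIGHT_eq_v0_LEFT[OF Omega'_T'[OF assms]])
  then show ?thesis unfolding junction_row_def by simp
qed

lemma v0_BOTTOM_iff_junction_col:
  assumes "x \<in> Omega' n"
  shows "v0 (BOTTOM (x (a, b))) = 0 \<longleftrightarrow> junction_col x a"
  using v0_LEFT_iff_junction_row[OF transpose_config_Omega'[OF assms], of b a]
  unfolding junction_row_transpose_config by (simp add: transpose_config_def)

lemma J'_iff_junction_col_row: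
  "x \<in> Omega' n \<Longrightarrow> x (a, b) \<in> J' n \<longleftrightarrow> junction_col x a \<and> junction_row x b"
  by (auto simp: J'_iff_v0_LEFT_BOTTOM Omega'_T' v0_LEFT_iff_junction_row
      v0_BOTTOM_iff_junction_col)

lemma v2_climb:
  assumes x: "x \<in> Omega' n" and "b < b'"
    and no_junction: "\<forall>y. b < y \<and> y < b' \<longrightarrow> \<not> junction_row x y"
  shows "v2 (BOTTOM (x (a, b'))) = v2 (TOP (x (a, b))) + (b' - b - 1)"
proof -
  have "b + 1 \<le> b'" using \<open>b < b'\<close> by simp
  then show ?thesis using no_junction
  proof (induct b' rule: int_ge_induct)
    case base
    then show ?case using Omega'_TOP_BOTTOM[OF x, of a b] by simp
  next
    case (step b')
    then have "v0 (LEFT (x (a, b'))) \<noteq> 0" using v0_LEFT_iff_junction_row[OF x] by auto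
    then have "v2 (TOP (x (a, b'))) = v2 (BOTTOM (x (a, b'))) + 1"
      using v2_TOP_eq_v2_BOTTOM_plus_1 Omega'_T'[OF x] by blast
    with step show ?case using Omega'_TOP_BOTTOM[OF x, of a b'] by simp
  qed
qed

section \<open>Distances between junction rows\<close>

lemma junction_row_window:
  assumes x: "x \<in> Omega' n"
  shows "\<exists>c. b \<le> c \<and> c \<le> b + int n + 1 \<and> junction_row x c"
proof (rule ccontr)
  assume "\<not> ?thesis"
  then have "\<forall>y. b - 1 < y \<and> y < b + int n + 2 \<longrightarrow> \<not> junction_row x y" by auto
  then have "v2 (BOTTOM (x (0, b + int n + 2))) = v2 (TOP (x (0, b - 1))) + (int n + 2)"
    using v2_climb[OF x, of "b - 1" "b + int n + 2"] by simp
  then show False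
    using v2_bounds[OF Omega'_T'[OF x, of "(0, b - 1)"]]
      v2_bounds[OF Omega'_T'[OF x, of "(0, b + int n + 2)"]] by linarith
qed

lemma unbounded_junction_rows:
  assumes x: "x \<in> Omega' n"
  shows "unbounded_both_ways (junction_row x)"
  unfolding unbounded_both_ways_def
proof (intro conjI allI)
  fix b
  obtain c where "b + 1 \<le> c" "junction_row x c"
    using junction_row_window[OF x, of "b + 1"] by blast
  then show "\<exists>c>b. junction_row x c" by (intro exI[of _ c]) simp
next
  fix b
  obtain c where "c \<le> b - 1" "junction_row x c"
    using junction_row_window[OF x, of "b - int n - 2"] by auto
  then show "\<exists>c<b. junction_row x c" by (intro exI[of _ c]) simp
qed

lemma unbounded_junction_cols: "x \<in> Omega' n \<Longrightarrow> unbounded_both_ways (junction_col x)"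
  using unbounded_junction_rows[OF transpose_config_Omega']
  by (simp add: junction_row_transpose_config)

lemma v2_climb_next_junction_row:
  assumes x: "x \<in> Omega' n"
  shows "v2 (BOTTOM (x (a, next_after (junction_row x) b))) =
           v2 (TOP (x (a, b))) + (next_after (junction_row x) b - b - 1)"
  using v2_climb[OF x next_after_gt] not_between_next_after by blast

lemma next_junction_row: "x \<in> Omega' n \<Longrightarrow> junction_row x (next_after (junction_row x) b)"
  using unbounded_junction_rows by (auto intro: next_after_mem simp: unbounded_both_ways_def)

lemma junction_row_gap_ge:
  assumes x: "x \<in> Omega' n" and b: "junction_row x b"
  shows "int n \<le> next_after (junction_row x) b - b"
proof -
  let ?b' = "next_after (junction_row x) b"
  obtain a where "junction_col x a"
    using unbounded_junction_cols[OF x] unfolding unbounded_both_ways_def by blast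
  with b next_junction_row[OF x] have J: "x (a, b) \<in> J' n" "x (a, ?b') \<in> J' n"
    by (simp_all add: J'_iff_junction_col_row[OF x])
  show ?thesis
    using J'_v2_bounds[OF J(1)] J'_v2_bounds[OF J(2)]
      v2_climb_next_junction_row[OF x, of a b] by linarith
qed

lemma no_junction_row_gap_3:
  assumes x: "x \<in> Omega' 1" and cols: "\<forall>a. junction_col x a" and b: "junction_row x b"
    and gap: "next_after (junction_row x) b = b + 3"
  shows False
proof -
  have rows: "junction_row x (b + 3)" "\<not> junction_row x (b + 1)" "\<not> junction_row x (b + 2)"
    using next_junction_row[OF x, of b] not_between_next_after[of b _ "junction_row x"] gap
    by auto
  have ends: "TOP (x (a, b)) = (0,0,0) \<and> BOTTOM (x (a, b + 3)) = (0,1,2)" for a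
  proof -
    have "x (a, b) \<in> J' 1" "x (a, b + 3) \<in> J' 1"
      using J'_iff_junction_col_row[OF x] cols b rows(1) by blast+
    moreover have "v2 (BOTTOM (x (a, b + 3))) = v2 (TOP (x (a, b))) + 2"
      using v2_climb_next_junction_row[OF x, of a b] gap by simp
    ultimately show ?thesis by (rule J'_1_v2_gap_2)
  qed
  txt \<open>Row b + 2 must consist of hat Y tiles, which forces hat G tiles into row b + 1, but
    their left and right colours differ.\<close>
  have row2: "LEFT (x (a, b + 2)) = (1,1,2) \<and>
      (RIGHT (x (a, b + 2)) = (1,1,2) \<longrightarrow> BOTTOM (x (a, b + 2)) = (0,1,1))" for a
    using T'_1_below_012[OF Omega'_T'[OF x]] ends[of a] Omega'_TOP_BOTTOM[OF x, of a "b + 2"]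
      v0_LEFT_iff_junction_row[OF x] rows(3) by (simp add: add.assoc)
  have "BOTTOM (x (a, b + 2)) = (0,1,1)" for a
    using row2[of a] row2[of "a + 1"] Omega'_RIGHT_LEFT[OF x, of a "b + 2"] by simp
  then have row1: "LEFT (x (a, b + 1)) = (1,1,2) \<and> RIGHT (x (a, b + 1)) = (1,1,1)" for a
    using T'_1_above_000[OF Omega'_T'[OF x]] ends[of a] Omega'_TOP_BOTTOM[OF x, of a b]
      Omega'_TOP_BOTTOM[OF x, of a "b + 1"] v0_LEFT_iff_junction_row[OF x] rows(2)
    by (simp add: add.assoc)
  show False using row1[of 0] row1[of 1] Omega'_RIGHT_LEFT[OF x, of 0 "b + 1"] by simp
qed

lemma junction_row_gap_le:
  assumes n: "1 \<le> n" and x: "x \<in> Omega' n" and b: "junction_row x b"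
  shows "next_after (junction_row x) b - b \<le> int n + 1"
proof (cases "\<forall>a. junction_col x a")
  case False
  then obtain a where "\<not> junction_col x a" by blast
  then have "1 \<le> v2 (TOP (x (a, b)))"
    using v2_TOP_ge_1[OF Omega'_T'[OF x]] v0_LEFT_iff_junction_row[OF x]
      v0_BOTTOM_iff_junction_col[OF x] b by blast
  then show ?thesis
    using v2_climb_next_junction_row[OF x, of a b]
      v2_bounds[OF Omega'_T'[OF x, of "(a, next_after (junction_row x) b)"]] by linarith
next
  case True
  have "x (0, b) \<in> J' n" "x (1, b) \<in> J' n"
    using True b J'_iff_junction_col_row[OF x] by blast+
  then have "n = 1"
    using J'_horizontal_neighbours Omega'_RIGHT_LEFT[OF x, of 0 b] n by fastforce
  have "next_after (junction_row x) b - b \<le> int n + 2"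
    using v2_climb_next_junction_row[OF x, of 0 b] v2_bounds[OF Omega'_T'[OF x, of "(0, b)"]]
      v2_bounds[OF Omega'_T'[OF x, of "(0, next_after (junction_row x) b)"]] by linarith
  moreover have "next_after (junction_row x) b \<noteq> b + 3"
    using no_junction_row_gap_3[of x b] x True b \<open>n = 1\<close> by auto
  ultimately show ?thesis using \<open>n = 1\<close> by simp
qed

lemma junction_row_gap:
  "1 \<le> n \<Longrightarrow> x \<in> Omega' n \<Longrightarrow> junction_row x b \<Longrightarrow>
     next_after (junction_row x) b - b \<in> {int n, int n + 1}"
  using junction_row_gap_ge junction_row_gap_le by fastforce

lemma junction_col_gap:
  "1 \<le> n \<Longrightarrow> x \<in> Omega' n \<Longrightarrow> junction_col x a \<Longrightarrow>
     next_after (junction_col x) a - a \<in> {int n, int n + 1}"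
  using junction_row_gap[OF _ transpose_config_Omega']
  by (simp add: junction_row_transpose_config)

lemma good_division_grid_blocks:
  assumes n: "1 \<le> n" and x: "x \<in> Omega' n"
  shows "good_division n x (grid_blocks (junction_col x) (junction_row x))"
proof -
  have block: "fst (block_size B) \<in> {int n, int n + 1} \<and>
      snd (block_size B) \<in> {int n, int n + 1} \<and> x (corner B) \<in> J' n \<and> (\<forall>m\<in>cells B. x m \<in> J' n \<longrightarrow> m = corner B)"
    if B_in: "B \<in> grid_blocks (junction_col x) (junction_row x)" for B
  proof -
    obtain a b where B: "B = grid_block (junction_col x) (junction_row x) (a, b)"
      and ab: "junction_col x a" "junction_row x b"
      using B_in unfolding grid_blocks_def by blast
    then show ?thesis
      using junction_col_gap[OF n x ab(1)] junction_row_gap[OF n x ab(2)]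
        grid_block_marked_cell J'_iff_junction_col_row[OF x] by fastforce
  qed
  show ?thesis
    unfolding good_division_def
    using block grid_blocks_partition unbounded_junction_cols[OF x] unbounded_junction_rows[OF x]
    by blast
qed

theorem proposition6p4:
  fixes n :: nat and x :: "int \<times> int \<Rightarrow> tile"
  assumes "n \<ge> 1" and "x \<in> Omega' n"
  shows "\<exists>!D. good_division n x D"
proof
  show "good_division n x (grid_blocks (junction_col x) (junction_row x))"
    using good_division_grid_blocks assms by blast
next
  fix D assume "good_division n x D"
  moreover have "x m \<in> J' n \<longleftrightarrow> junction_col x (fst m) \<and> junction_row x (snd m)" for m
    using J'_iff_junction_col_row[OF assms(2)] by (cases m) simp
  ultimately show "D = grid_blocks (junction_col x) (junction_row x)"
    using assms unfolding good_division_def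
    by (intro grid_blocks_unique unbounded_junction_cols unbounded_junction_rows) auto
qed

end
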